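(* Let $k:\mathbb{N}\to\mathbb{N}$ satisfy $k(n)\to\infty$ as $n\to\infty$ and $k(n)=o(\sqrt{n})$. Then $$g(n,K_3,S_{k(n)+1})\ge (1+o(1))\frac{n\,k(n)^2}{48}.$$
   Context: Constructor-Blocker game: given graphs $H$ and $F$, two players, Constructor and Blocker, alternately claim previously unclaimed edges of the complete graph $K_n$, Constructor moving first. Constructor may only claim an edge if her graph (the edges she has claimed) remains $F$-free (contains no subgraph isomorphic to $F$); Blocker may claim any unclaimed edge. The game ends when Constructor cannot claim any more edges or all edges are claimed. The score is the number of copies of $H$ in Constructor's graph at the end. Constructor maximizes, Blocker minimizes; $g(n,H,F)$ denotes the score under optimal play by both. $S_k$ denotes the star with $k$ leaves (so being $S_{k+1}$-free means maximum degree at most $k$). *)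

theory Defs
  imports Main "HOL-Library.Landau_Symbols"
begin

definition Kn_edges :: "nat \<Rightarrow> nat set set" where
  "Kn_edges n = {e. e \<subseteq> {0..<n} \<and> card e = 2}"

text \<open>Value of the Constructor-Blocker game from a position.
  ok: allowed Constructor graphs (F-freeness), sc: score of Constructor's graph,
  E: edge set of the board, turn = True means Constructor to move,
  C / B: edges claimed by Constructor / Blocker.  The fuel argument bounds the
  number of remaining moves (card E suffices since every move claims a new edge).\<close>
primrec play :: "nat \<Rightarrow> (nat set set \<Rightarrow> bool) \<Rightarrow> (nat set set \<Rightarrow> nat) \<Rightarrow> nat set set
    \<Rightarrow> bool \<Rightarrow> nat set set \<Rightarrow> nat set set \<Rightarrow> nat" where
  "play 0 ok sc E turn C B = sc C"
| "play (Suc m) ok sc E turn C B =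
    (let free = E - C - B; legal = {e \<in> free. ok (insert e C)} in
     if legal = {} then sc C
     else if turn then Max ((\<lambda>e. play m ok sc E False (insert e C) B) ` legal)
     else Min ((\<lambda>e. play m ok sc E True C (insert e B)) ` free))"

definition game_value :: "nat \<Rightarrow> (nat set set \<Rightarrow> bool) \<Rightarrow> (nat set set \<Rightarrow> nat) \<Rightarrow> nat" where
  "game_value n ok sc = play (card (Kn_edges n)) ok sc (Kn_edges n) True {} {}"

definition triangle_count :: "nat set set \<Rightarrow> nat" where
  "triangle_count G = card {T. card T = 3 \<and> (\<forall>x\<in>T. \<forall>y\<in>T. x \<noteq> y \<longrightarrow> {x, y} \<in> G)}"

text \<open>S_{k+1}-free, i.e. maximum degree at most k.\<close>
definition star_free :: "nat \<Rightarrow> nat set set \<Rightarrow> bool" where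
  "star_free k G \<longleftrightarrow> (\<forall>v. card {e \<in> G. v \<in> e} \<le> k)"

definition g_K3_star :: "nat \<Rightarrow> nat \<Rightarrow> nat" where
  "g_K3_star n k = game_value n (star_free k) triangle_count"

end

theory Submission
  imports Defs
begin

(* Constructor splits the vertices into q = n div (k + 1) disjoint blocks of k + 1 vertices and only
   claims edges inside blocks; such a graph has maximum degree at most k, so the degree constraint
   never stops her. Inside the blocks she plays an Erdos-Selfridge type weight strategy: a block
   triangle containing no Blocker edge has weight 2^(number of its edges owned by Constructor), and
   Constructor always claims a free block edge of maximal total weight w. Her move raises the
   potential by w; afterwards each free edge has weight at most w + 8, since two distinct edges lie
   in at most one common triangle, so Blocker's reply lowers it by at most w + 8. Hence every block
   edge costs at most 8, and at the end the surviving triangles all have weight 8 and are triangles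
   of Constructor's graph. Starting from potential q * C(k+1, 3) with q * C(k+1, 2) block edges,
   8 g >= q C(k+1,3) - 8 q C(k+1,2) = (1 + o(1)) n k^2 / 6 when k -> infinity. *)

section \<open>Values of the game\<close>

declare play.simps(2) [simp del]

lemma play_Suc_no_move:
  assumes "{e \<in> E - C - B. ok (insert e C)} = {}"
  shows "play (Suc m) ok sc E turn C B = sc C"
  unfolding play.simps Let_def using assms by (rule if_P)

lemma play_Suc_move:
  assumes "{e \<in> E - C - B. ok (insert e C)} \<noteq> {}"
  shows "play (Suc m) ok sc E True C B
           = Max ((\<lambda>e. play m ok sc E False (insert e C) B) ` {e \<in> E - C - B. ok (insert e C)})"
    and "play (Suc m) ok sc E False C B = Min ((\<lambda>f. play m ok sc E True C (insert f B)) ` (E - C - B))"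
  using assms by (simp_all only: play.simps Let_def if_True if_False)

lemma play_ge_score:
  assumes finite_board: "finite E"
    and sc_mono: "\<And>C e. C \<subseteq> E \<Longrightarrow> e \<in> E \<Longrightarrow> sc C \<le> sc (insert e C)"
    and "C \<subseteq> E"
  shows "sc C \<le> play m ok sc E turn C B"
  using \<open>C \<subseteq> E\<close>
proof (induction m arbitrary: turn C B)
  case 0
  then show ?case by simp
next
  case (Suc m)
  let ?legal = "{e \<in> E - C - B. ok (insert e C)}"
  show ?case
  proof (cases "?legal = {}")
    case True
    then show ?thesis by (simp only: play_Suc_no_move order.refl)
  next
    case False
    then obtain e where e: "e \<in> ?legal" by blast
    show ?thesis
    proof (cases turn)
      case True
      have "sc C \<le> sc (insert e C)" using sc_mono Suc.prems e by blast
      also have "\<dots> \<le> play m ok sc E False (insert e C) B" using Suc.IH Suc.prems e by blast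
      also have "\<dots> \<le> Max ((\<lambda>e. play m ok sc E False (insert e C) B) ` ?legal)"
        using finite_board e by (intro Max_ge) auto
      also have "\<dots> = play (Suc m) ok sc E True C B" using play_Suc_move(1)[OF False] by (rule sym)
      finally show ?thesis using True by (simp only:)
    next
      case turn: False
      have "sc C \<le> Min ((\<lambda>f. play m ok sc E True C (insert f B)) ` (E - C - B))"
        using finite_board e Suc.IH Suc.prems by (subst Min_ge_iff) auto
      also have "\<dots> = play (Suc m) ok sc E False C B" using play_Suc_move(2)[OF False] by (rule sym)
      finally show ?thesis using turn by (simp only:)
    qed
  qed
qed

lemma play_Suc_True_ge_move:
  assumes "finite E" and "e \<in> E - C - B" and "ok (insert e C)"
  shows "play m ok sc E False (insert e C) B \<le> play (Suc m) ok sc E True C B"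
proof -
  let ?legal = "{e \<in> E - C - B. ok (insert e C)}"
  have e: "e \<in> ?legal" using assms by blast
  then have "play m ok sc E False (insert e C) B
      \<le> Max ((\<lambda>e. play m ok sc E False (insert e C) B) ` ?legal)"
    using \<open>finite E\<close> by (intro Max_ge) auto
  also have "\<dots> = play (Suc m) ok sc E True C B"
    using e by (intro play_Suc_move(1)[symmetric]) blast
  finally show ?thesis .
qed

lemma play_Suc_False_eq_move:
  assumes "finite E" and "e \<in> E - C - B" and "ok (insert e C)"
  obtains f where "f \<in> E - C - B"
    and "play (Suc m) ok sc E False C B = play m ok sc E True C (insert f B)"
proof -
  let ?val = "\<lambda>f. play m ok sc E True C (insert f B)"
  have "Min (?val ` (E - C - B)) \<in> ?val ` (E - C - B)"
    using assms by (intro Min_in) auto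
  then obtain f where f: "f \<in> E - C - B" and min: "Min (?val ` (E - C - B)) = ?val f" by auto
  have "{e \<in> E - C - B. ok (insert e C)} \<noteq> {}" using assms by blast
  then have "play (Suc m) ok sc E False C B = Min (?val ` (E - C - B))" by (rule play_Suc_move(2))
  then show ?thesis using min by (intro that[OF f]) (simp only:)
qed

section \<open>Potential strategies for Constructor\<close>

locale potential_strategy =
  fixes E :: "nat set set" and ok :: "nat set set \<Rightarrow> bool" and sc :: "nat set set \<Rightarrow> nat"
    and S :: "nat set set"
    and \<Phi> :: "nat set set \<Rightarrow> nat set set \<Rightarrow> int"
    and w :: "nat set set \<Rightarrow> nat set set \<Rightarrow> nat set \<Rightarrow> int"
    and d :: int
  assumes finite_board: "finite E"
    and safe_subset: "S \<subseteq> E"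
    and ok_safe: "C \<subseteq> S \<Longrightarrow> ok C"
    and sc_mono: "C \<subseteq> E \<Longrightarrow> e \<in> E \<Longrightarrow> sc C \<le> sc (insert e C)"
    and potential_Constructor: "e \<notin> C \<Longrightarrow> \<Phi> (insert e C) B = \<Phi> C B + w C B e"
    and potential_Blocker: "\<Phi> C (insert f B) = \<Phi> C B - w C B f"
    and weight_nonneg: "0 \<le> w C B f"
    and weight_unsafe: "f \<notin> S \<Longrightarrow> w C B f = 0"
    and weight_Constructor: "e \<notin> C \<Longrightarrow> f \<noteq> e \<Longrightarrow> w (insert e C) B f \<le> w C B f + d"
    and potential_final: "C \<subseteq> S \<Longrightarrow> S \<subseteq> C \<union> B \<Longrightarrow> \<Phi> C B \<le> d * int (sc C)"
    and d_nonneg: "0 \<le> d"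
begin

lemma finite_safe: "finite S"
  using finite_board safe_subset by (rule finite_subset[rotated])

lemma terminal_bound:
  assumes "C \<subseteq> S" and "S - C - B = {}" and "0 \<le> M"
  shows "\<Phi> C B - M - d * int (card (S - C - B)) \<le> d * int (play m ok sc E turn C B)"
proof -
  have "sc C \<le> play m ok sc E turn C B"
    using play_ge_score[OF finite_board sc_mono] assms(1) safe_subset by (meson subset_trans)
  then have "d * int (sc C) \<le> d * int (play m ok sc E turn C B)"
    using d_nonneg by (intro mult_left_mono) auto
  moreover have "\<Phi> C B \<le> d * int (sc C)" using assms by (intro potential_final) auto
  moreover have "d * int (card (S - C - B)) = 0"
    by (simp only: assms(2) card.empty of_nat_0 mult_zero_right)
  ultimately show ?thesis using \<open>0 \<le> M\<close> by linarith
qed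

lemma Constructor_step:
  assumes C: "C \<subseteq> S" and free: "card (E - C - B) \<le> Suc m" and "S - C - B \<noteq> {}"
    and IH: "\<And>C' M. C' \<subseteq> S \<Longrightarrow> card (E - C' - B) \<le> m \<Longrightarrow> 0 \<le> M
               \<Longrightarrow> (\<forall>f \<in> S - C' - B. w C' B f \<le> M)
               \<Longrightarrow> \<Phi> C' B - M - d * int (card (S - C' - B)) \<le> d * int (play m ok sc E False C' B)"
  shows "\<Phi> C B - d * int (card (S - C - B)) \<le> d * int (play (Suc m) ok sc E True C B)"
proof -
  let ?A = "S - C - B"
  have "Max (w C B ` ?A) \<in> w C B ` ?A" using finite_safe \<open>?A \<noteq> {}\<close> by (intro Max_in) auto
  then obtain e where e: "e \<in> ?A" and "w C B e = Max (w C B ` ?A)" by auto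
  then have e_max: "\<forall>f \<in> ?A. w C B f \<le> w C B e" using finite_safe by simp
  let ?C = "insert e C"
  have "e \<in> E - C - B" using e safe_subset by blast
  have "E - ?C - B = (E - C - B) - {e}" by blast
  then have "card (E - ?C - B) = card (E - C - B) - 1"
    using \<open>e \<in> E - C - B\<close> by (simp only: card_Diff_singleton)
  then have free': "card (E - ?C - B) \<le> m" using free by linarith
  have "S - ?C - B = ?A - {e}" by blast
  then have "card (S - ?C - B) = card ?A - 1" using e by (simp only: card_Diff_singleton)
  moreover have "0 < card ?A" using e finite_safe by (auto simp: card_gt_0_iff)
  ultimately have card_safe: "d * int (card (S - ?C - B)) = d * int (card ?A) - d"
    by (simp add: of_nat_diff algebra_simps)
  have "\<forall>f \<in> S - ?C - B. w ?C B f \<le> w C B e + d"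
  proof
    fix f assume f: "f \<in> S - ?C - B"
    then have "w ?C B f \<le> w C B f + d" using e by (intro weight_Constructor) auto
    moreover have "w C B f \<le> w C B e" using e_max f by blast
    ultimately show "w ?C B f \<le> w C B e + d" by linarith
  qed
  then have "\<Phi> ?C B - (w C B e + d) - d * int (card (S - ?C - B))
      \<le> d * int (play m ok sc E False ?C B)"
    using C e free' weight_nonneg[of C B e] d_nonneg by (intro IH) auto
  moreover have "play m ok sc E False ?C B \<le> play (Suc m) ok sc E True C B"
    using \<open>e \<in> E - C - B\<close> C e by (intro play_Suc_True_ge_move finite_board ok_safe) auto
  then have "d * int (play m ok sc E False ?C B) \<le> d * int (play (Suc m) ok sc E True C B)"
    using d_nonneg by (intro mult_left_mono) auto
  moreover have "\<Phi> ?C B = \<Phi> C B + w C B e" using e by (intro potential_Constructor) auto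
  ultimately show ?thesis using card_safe by linarith
qed

lemma Blocker_step:
  assumes C: "C \<subseteq> S" and free: "card (E - C - B) \<le> Suc m" and "S - C - B \<noteq> {}"
    and IH: "\<And>B'. card (E - C - B') \<le> m
               \<Longrightarrow> \<Phi> C B' - d * int (card (S - C - B')) \<le> d * int (play m ok sc E True C B')"
    and "0 \<le> M" and M: "\<forall>f \<in> S - C - B. w C B f \<le> M"
  shows "\<Phi> C B - M - d * int (card (S - C - B)) \<le> d * int (play (Suc m) ok sc E False C B)"
proof -
  obtain e where "e \<in> S - C - B" using \<open>S - C - B \<noteq> {}\<close> by blast
  then have "e \<in> E - C - B" and "ok (insert e C)" using C safe_subset by (auto intro: ok_safe)
  then obtain f where f: "f \<in> E - C - B"
    and play_eq: "play (Suc m) ok sc E False C B = play m ok sc E True C (insert f B)"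
    by (rule play_Suc_False_eq_move[OF finite_board])
  have "E - C - insert f B = (E - C - B) - {f}" by blast
  then have "card (E - C - insert f B) = card (E - C - B) - 1"
    using f by (simp only: card_Diff_singleton)
  then have "card (E - C - insert f B) \<le> m" using free by linarith
  then have "\<Phi> C (insert f B) - d * int (card (S - C - insert f B))
      \<le> d * int (play m ok sc E True C (insert f B))" by (rule IH)
  moreover have "w C B f \<le> M" using f M \<open>0 \<le> M\<close> weight_unsafe by (cases "f \<in> S") auto
  moreover have "card (S - C - insert f B) \<le> card (S - C - B)"
    using finite_safe by (intro card_mono) auto
  then have "d * int (card (S - C - insert f B)) \<le> d * int (card (S - C - B))"
    using d_nonneg by (intro mult_left_mono) auto
  ultimately show ?thesis unfolding play_eq using potential_Blocker[of C f B] by linarith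
qed

lemma terminal_invariant:
  assumes "C \<subseteq> S" and "S - C - B = {}"
  shows "\<Phi> C B - d * int (card (S - C - B)) \<le> d * int (play m ok sc E True C B)
    \<and> (\<forall>M \<ge> 0. (\<forall>f \<in> S - C - B. w C B f \<le> M)
          \<longrightarrow> \<Phi> C B - M - d * int (card (S - C - B)) \<le> d * int (play m ok sc E False C B))"
  using terminal_bound[OF assms order_refl, of m True] terminal_bound[OF assms]
  by (simp only: diff_0_right) blast

lemma potential_invariant:
  assumes "C \<subseteq> S" and "card (E - C - B) \<le> m"
  shows "\<Phi> C B - d * int (card (S - C - B)) \<le> d * int (play m ok sc E True C B)
    \<and> (\<forall>M \<ge> 0. (\<forall>f \<in> S - C - B. w C B f \<le> M)
          \<longrightarrow> \<Phi> C B - M - d * int (card (S - C - B)) \<le> d * int (play m ok sc E False C B))"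
  using assms
proof (induction m arbitrary: C B)
  case 0
  then have "S - C - B = {}" using finite_board safe_subset by auto
  with \<open>C \<subseteq> S\<close> show ?case by (rule terminal_invariant)
next
  case (Suc m)
  show ?case
  proof (cases "S - C - B = {}")
    case True
    with \<open>C \<subseteq> S\<close> show ?thesis by (rule terminal_invariant)
  next
    case False
    show ?thesis
    proof (intro conjI allI impI)
      show "\<Phi> C B - d * int (card (S - C - B)) \<le> d * int (play (Suc m) ok sc E True C B)"
        by (rule Constructor_step[OF Suc.prems False Suc.IH[THEN conjunct2, rule_format (no_asm)]])
      fix M :: int assume "0 \<le> M" and "\<forall>f \<in> S - C - B. w C B f \<le> M"
      then show "\<Phi> C B - M - d * int (card (S - C - B)) \<le> d * int (play (Suc m) ok sc E False C B)"
        by (intro Blocker_step[OF Suc.prems False Suc.IH[OF \<open>C \<subseteq> S\<close>, THEN conjunct1]])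
    qed
  qed
qed

theorem Constructor_guarantee:
  "\<Phi> {} {} - d * int (card S) \<le> d * int (play (card E) ok sc E True {} {})"
  using potential_invariant[of "{}" "{}" "card E"] by simp

end

section \<open>The triangle potential\<close>

definition edges_of :: "'a set \<Rightarrow> 'a set set" where
  "edges_of T = {e. e \<subseteq> T \<and> card e = 2}"

lemma finite_edges_of: "finite T \<Longrightarrow> finite (edges_of T)"
  unfolding edges_of_def by (rule finite_subset[of _ "Pow T"]) auto

lemma card_edges_of_triangle: "card T = 3 \<Longrightarrow> card (edges_of T) = 3"
  unfolding edges_of_def using n_subsets[of T 2] card.infinite[of T]
  by (fastforce simp: numeral_eq_Suc)

lemma triangle_eq_Un_edges:
  assumes "card T = 3" and e: "e \<in> edges_of T" and f: "f \<in> edges_of T" and "e \<noteq> f"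
  shows "T = e \<union> f"
proof -
  have "finite T" using \<open>card T = 3\<close> card.infinite by fastforce
  have sub: "e \<union> f \<subseteq> T" and "card e = 2" "card f = 2" using e f by (auto simp: edges_of_def)
  then have "finite e" "finite f" using \<open>finite T\<close> finite_subset by auto
  then have "\<not> f \<subseteq> e" using card_subset_eq \<open>card e = 2\<close> \<open>card f = 2\<close> \<open>e \<noteq> f\<close> by metis
  then have "card e < card (e \<union> f)" using \<open>finite e\<close> \<open>finite f\<close> by (intro psubset_card_mono) auto
  then have "card T \<le> card (e \<union> f)" using \<open>card e = 2\<close> \<open>card T = 3\<close> by simp
  then show ?thesis using sub \<open>finite T\<close> by (metis card_seteq)
qed

lemma card_edges_of_containing_le:
  assumes "finite A"
  shows "card {e \<in> edges_of A. v \<in> e} \<le> card A - 1"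
proof (cases "v \<in> A")
  case True
  have "{e \<in> edges_of A. v \<in> e} \<subseteq> (\<lambda>u. {v, u}) ` (A - {v})"
  proof
    fix e assume "e \<in> {e \<in> edges_of A. v \<in> e}"
    then obtain x y where "e = {x, y}" "x \<noteq> y" "{x, y} \<subseteq> A" "v \<in> {x, y}"
      by (auto simp: edges_of_def card_2_iff)
    then show "e \<in> (\<lambda>u. {v, u}) ` (A - {v})" by auto
  qed
  then have "card {e \<in> edges_of A. v \<in> e} \<le> card (A - {v})"
    using assms by (meson card_image_le card_mono finite_Diff finite_imageI order_trans)
  then show ?thesis using True assms by simp
next
  case False
  then have "{e \<in> edges_of A. v \<in> e} = {}" by (auto simp: edges_of_def)
  then show ?thesis by (simp only: card.empty zero_le)
qed

definition tri_weight :: "'a set set \<Rightarrow> 'a set \<Rightarrow> int" where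
  "tri_weight C T = 2 ^ card (edges_of T \<inter> C)"

definition untouched :: "'a set set \<Rightarrow> 'a set set \<Rightarrow> 'a set set" where
  "untouched \<T> B = {T \<in> \<T>. edges_of T \<inter> B = {}}"

definition tri_potential :: "'a set set \<Rightarrow> 'a set set \<Rightarrow> 'a set set \<Rightarrow> int" where
  "tri_potential \<T> C B = (\<Sum>T \<in> untouched \<T> B. tri_weight C T)"

definition edge_weight :: "'a set set \<Rightarrow> 'a set set \<Rightarrow> 'a set set \<Rightarrow> 'a set \<Rightarrow> int" where
  "edge_weight \<T> C B f = (\<Sum>T \<in> {T \<in> untouched \<T> B. f \<in> edges_of T}. tri_weight C T)"

lemma tri_weight_pos: "0 < tri_weight C T"
  by (simp add: tri_weight_def)

lemma tri_weight_le_8: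
  assumes "card T = 3"
  shows "tri_weight C T \<le> 8"
proof -
  have "card (edges_of T \<inter> C) \<le> 3"
    using assms card_edges_of_triangle card_mono[OF finite_edges_of] card.infinite
    by (metis Int_lower1 zero_neq_numeral)
  then have "(2::int) ^ card (edges_of T \<inter> C) \<le> 2 ^ 3" by (intro power_increasing) auto
  then show ?thesis by (simp add: tri_weight_def)
qed

lemma tri_weight_insert:
  assumes "finite T" and "e \<notin> C"
  shows "tri_weight (insert e C) T = tri_weight C T + (if e \<in> edges_of T then tri_weight C T else 0)"
proof (cases "e \<in> edges_of T")
  case True
  then have "edges_of T \<inter> insert e C = insert e (edges_of T \<inter> C)" by auto
  moreover have "finite (edges_of T \<inter> C)" using finite_edges_of[OF assms(1)] by blast
  ultimately show ?thesis using True assms(2) by (simp add: tri_weight_def)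
next
  case False
  then have "edges_of T \<inter> insert e C = edges_of T \<inter> C" by auto
  then show ?thesis using False by (simp add: tri_weight_def)
qed

lemma sum_tri_weight_insert:
  assumes "finite \<S>" and "\<And>T. T \<in> \<S> \<Longrightarrow> finite T" and "e \<notin> C"
  shows "(\<Sum>T \<in> \<S>. tri_weight (insert e C) T)
           = (\<Sum>T \<in> \<S>. tri_weight C T) + (\<Sum>T \<in> {T \<in> \<S>. e \<in> edges_of T}. tri_weight C T)"
  using assms by (simp add: tri_weight_insert sum.distrib sum.inter_filter)

context
  fixes \<T> :: "'a set set"
  assumes finite_family: "finite \<T>" and triangles: "\<And>T. T \<in> \<T> \<Longrightarrow> card T = 3"
begin

lemma finite_triangle: "T \<in> \<T> \<Longrightarrow> finite T"
  using triangles card.infinite by fastforce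

lemma tri_potential_insert_Constructor:
  "e \<notin> C \<Longrightarrow> tri_potential \<T> (insert e C) B = tri_potential \<T> C B + edge_weight \<T> C B e"
  unfolding tri_potential_def edge_weight_def untouched_def
  using finite_family finite_triangle by (subst sum_tri_weight_insert) auto

lemma tri_potential_insert_Blocker:
  "tri_potential \<T> C (insert f B) = tri_potential \<T> C B - edge_weight \<T> C B f"
proof -
  have "untouched \<T> (insert f B) = untouched \<T> B - {T \<in> untouched \<T> B. f \<in> edges_of T}"
    by (auto simp: untouched_def)
  moreover have "finite (untouched \<T> B)" using finite_family by (simp add: untouched_def)
  ultimately show ?thesis unfolding tri_potential_def edge_weight_def
    by (simp add: sum_diff)
qed

lemma edge_weight_nonneg: "0 \<le> edge_weight \<T> C B f"
  unfolding edge_weight_def by (intro sum_nonneg) (simp add: tri_weight_pos less_imp_le)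

lemma edge_weight_eq_0: "(\<And>T. T \<in> \<T> \<Longrightarrow> f \<notin> edges_of T) \<Longrightarrow> edge_weight \<T> C B f = 0"
  unfolding edge_weight_def untouched_def by (metis (no_types, lifting) mem_Collect_eq sum.neutral)

lemma edge_weight_insert_le:
  assumes "e \<notin> C" and "f \<noteq> e"
  shows "edge_weight \<T> (insert e C) B f \<le> edge_weight \<T> C B f + 8"
proof -
  let ?S = "{T \<in> untouched \<T> B. f \<in> edges_of T}"
  let ?G = "{T \<in> ?S. e \<in> edges_of T}"
  have split: "edge_weight \<T> (insert e C) B f = edge_weight \<T> C B f + (\<Sum>T \<in> ?G. tri_weight C T)"
    unfolding edge_weight_def using finite_family finite_triangle assms(1)
    by (intro sum_tri_weight_insert) (auto simp: untouched_def)
  have "?G \<subseteq> {e \<union> f}"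
    using triangle_eq_Un_edges triangles assms(2) by (fastforce simp: untouched_def)
  then have "card ?G \<le> 1" using card_mono[of "{e \<union> f}" ?G] by simp
  have "(\<Sum>T \<in> ?G. tri_weight C T) \<le> of_nat (card ?G) * 8"
    by (rule sum_bounded_above) (auto simp: untouched_def intro: tri_weight_le_8 triangles)
  also have "\<dots> \<le> 8" using \<open>card ?G \<le> 1\<close> by simp
  finally show ?thesis using split by simp
qed

lemma tri_potential_empty: "tri_potential \<T> {} {} = int (card \<T>)"
  by (simp add: tri_potential_def untouched_def tri_weight_def)

end

lemma finite_triangles_of:
  assumes "C \<subseteq> Kn_edges n"
  shows "finite {T. card T = 3 \<and> (\<forall>x\<in>T. \<forall>y\<in>T. x \<noteq> y \<longrightarrow> {x, y} \<in> C)}"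
proof (rule finite_subset[of _ "Pow {0..<n}"])
  show "{T. card T = 3 \<and> (\<forall>x\<in>T. \<forall>y\<in>T. x \<noteq> y \<longrightarrow> {x, y} \<in> C)} \<subseteq> Pow {0..<n}"
  proof clarify
    fix T x assume T: "card T = 3" "\<forall>x\<in>T. \<forall>y\<in>T. x \<noteq> y \<longrightarrow> {x, y} \<in> C" and "x \<in> T"
    have "\<not> T \<subseteq> {x}" using T(1) card_mono[of "{x}" T] by auto
    then obtain y where "y \<in> T" "y \<noteq> x" by blast
    then have "{x, y} \<in> Kn_edges n" using T \<open>x \<in> T\<close> assms by auto
    then show "x \<in> {0..<n}" by (auto simp: Kn_edges_def)
  qed
qed simp

lemma triangle_count_mono:
  "C \<subseteq> C' \<Longrightarrow> C' \<subseteq> Kn_edges n \<Longrightarrow> triangle_count C \<le> triangle_count C'"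
  unfolding triangle_count_def by (rule card_mono[OF finite_triangles_of]) blast+

lemma tri_potential_le_triangle_count:
  assumes "C \<subseteq> Kn_edges n" and triangles: "\<And>T. T \<in> \<T> \<Longrightarrow> card T = 3"
    and claimed: "\<And>T. T \<in> \<T> \<Longrightarrow> edges_of T \<subseteq> C \<union> B"
  shows "tri_potential \<T> C B \<le> 8 * int (triangle_count C)"
proof -
  have full: "edges_of T \<subseteq> C" if "T \<in> untouched \<T> B" for T
    using that claimed by (auto simp: untouched_def)
  have "tri_potential \<T> C B = (\<Sum>T \<in> untouched \<T> B. 8)"
    unfolding tri_potential_def tri_weight_def using full triangles
    by (intro sum.cong) (auto simp: Int_absorb2 card_edges_of_triangle untouched_def)
  also have "\<dots> = 8 * int (card (untouched \<T> B))" by simp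
  also have "card (untouched \<T> B) \<le> triangle_count C"
    unfolding triangle_count_def
  proof (intro card_mono[OF finite_triangles_of[OF assms(1)]] subsetI CollectI conjI ballI impI)
    fix T x y assume T: "T \<in> untouched \<T> B" and "x \<in> T" "y \<in> T" "x \<noteq> y"
    then have "{x, y} \<in> edges_of T" by (auto simp: edges_of_def)
    then show "{x, y} \<in> C" using full[OF T] by blast
  qed (use triangles in \<open>auto simp: untouched_def\<close>)
  finally show ?thesis by simp
qed

section \<open>Disjoint cliques of size k + 1\<close>

definition block :: "nat \<Rightarrow> nat \<Rightarrow> nat set" where
  "block b j = {j * b..<Suc j * b}"

definition block_edges :: "nat \<Rightarrow> nat \<Rightarrow> nat set set" where
  "block_edges b q = (\<Union>j<q. edges_of (block b j))"

definition block_triangles :: "nat \<Rightarrow> nat \<Rightarrow> nat set set" where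
  "block_triangles b q = (\<Union>j<q. {T. T \<subseteq> block b j \<and> card T = 3})"

lemma block_div: "x \<in> block b j \<Longrightarrow> x div b = j"
  unfolding block_def by (intro div_nat_eqI) (auto simp: mult.commute)

lemma finite_block_subsets: "finite {T. T \<subseteq> block b j \<and> card T = c}"
  by (rule finite_subset[of _ "Pow (block b j)"]) (auto simp: block_def)

lemma finite_block_triangles: "finite (block_triangles b q)"
  unfolding block_triangles_def by (intro finite_UN_I finite_lessThan finite_block_subsets)

lemma card_block_triangles: "card (block_triangles b q) = q * (b choose 3)"
proof -
  have "card (block_triangles b q) = (\<Sum>j<q. card {T. T \<subseteq> block b j \<and> card T = 3})"
    unfolding block_triangles_def
  proof (rule card_UN_disjoint)
    show "\<forall>j\<in>{..<q}. finite {T. T \<subseteq> block b j \<and> card T = 3}"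
      using finite_block_subsets by blast
    show "\<forall>i\<in>{..<q}. \<forall>j\<in>{..<q}. i \<noteq> j \<longrightarrow>
        {T. T \<subseteq> block b i \<and> card T = 3} \<inter> {T. T \<subseteq> block b j \<and> card T = 3} = {}"
    proof (intro ballI impI)
      fix i j :: nat assume "i \<noteq> j"
      then have "T = {}" if "T \<subseteq> block b i" "T \<subseteq> block b j" for T
        using that block_div by blast
      then show "{T. T \<subseteq> block b i \<and> card T = 3} \<inter> {T. T \<subseteq> block b j \<and> card T = 3} = {}"
        by (intro equals0I) (metis (mono_tags) IntE mem_Collect_eq card.empty zero_neq_numeral)
    qed
  qed simp
  also have "\<dots> = q * (b choose 3)" by (simp add: n_subsets block_def)
  finally show ?thesis .
qed

lemma card_block_edges_le: "card (block_edges b q) \<le> q * (b choose 2)"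
proof -
  have "card (block_edges b q) \<le> (\<Sum>j<q. card (edges_of (block b j)))"
    unfolding block_edges_def by (rule card_UN_le) simp
  also have "\<dots> = q * (b choose 2)" by (simp add: n_subsets block_def edges_of_def)
  finally show ?thesis .
qed

lemma edges_of_block_triangle: "T \<in> block_triangles b q \<Longrightarrow> edges_of T \<subseteq> block_edges b q"
  unfolding block_triangles_def block_edges_def edges_of_def by blast

lemma block_edges_subset_Kn_edges:
  assumes "q * b \<le> n"
  shows "block_edges b q \<subseteq> Kn_edges n"
proof -
  have "block b j \<subseteq> {0..<n}" if "j < q" for j
  proof -
    have "Suc j * b \<le> q * b" using that by (intro mult_le_mono1) simp
    then show ?thesis using assms by (auto simp: block_def)
  qed
  then show ?thesis unfolding block_edges_def edges_of_def Kn_edges_def by blast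
qed

lemma star_free_block_edges:
  assumes "G \<subseteq> block_edges (Suc k) q"
  shows "star_free k G"
  unfolding star_free_def
proof
  fix v
  let ?A = "block (Suc k) (v div Suc k)"
  have "{e \<in> G. v \<in> e} \<subseteq> {e \<in> edges_of ?A. v \<in> e}"
    using assms block_div unfolding block_edges_def edges_of_def by blast
  then have "card {e \<in> G. v \<in> e} \<le> card {e \<in> edges_of ?A. v \<in> e}"
    by (intro card_mono) (auto simp: block_def finite_edges_of)
  also have "\<dots> \<le> card ?A - 1" by (intro card_edges_of_containing_le) (simp add: block_def)
  finally show "card {e \<in> G. v \<in> e} \<le> k" by (simp add: block_def)
qed

lemma g_K3_star_ge_block_bound:
  assumes "q * Suc k \<le> n"
  shows "int (card (block_triangles (Suc k) q)) - 8 * int (card (block_edges (Suc k) q))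
           \<le> 8 * int (g_K3_star n k)"
proof -
  let ?\<T> = "block_triangles (Suc k) q" and ?S = "block_edges (Suc k) q"
  have triangles: "\<And>T. T \<in> ?\<T> \<Longrightarrow> card T = 3" by (auto simp: block_triangles_def)
  have finite_board: "finite (Kn_edges n)"
    unfolding Kn_edges_def by (rule finite_subset[of _ "Pow {0..<n}"]) auto
  interpret potential_strategy "Kn_edges n" "star_free k" triangle_count ?S
    "tri_potential ?\<T>" "edge_weight ?\<T>" 8
  proof
    show "finite (Kn_edges n)" by (rule finite_board)
    show "?S \<subseteq> Kn_edges n" using assms by (intro block_edges_subset_Kn_edges) (simp add: mult.commute)
    fix C B e f
    show "C \<subseteq> ?S \<Longrightarrow> star_free k C" by (rule star_free_block_edges)
    show "C \<subseteq> Kn_edges n \<Longrightarrow> e \<in> Kn_edges n \<Longrightarrow> triangle_count C \<le> triangle_count (insert e C)"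
      by (rule triangle_count_mono) auto
    show "e \<notin> C \<Longrightarrow> tri_potential ?\<T> (insert e C) B = tri_potential ?\<T> C B + edge_weight ?\<T> C B e"
      by (rule tri_potential_insert_Constructor[OF finite_block_triangles triangles])
    show "tri_potential ?\<T> C (insert f B) = tri_potential ?\<T> C B - edge_weight ?\<T> C B f"
      by (rule tri_potential_insert_Blocker[OF finite_block_triangles triangles])
    show "0 \<le> edge_weight ?\<T> C B f"
      by (rule edge_weight_nonneg[OF finite_block_triangles triangles])
    show "edge_weight ?\<T> C B f = 0" if "f \<notin> ?S"
    proof (rule edge_weight_eq_0[OF finite_block_triangles triangles])
      fix T assume "T \<in> ?\<T>"
      then show "f \<notin> edges_of T" using that edges_of_block_triangle by blast
    qed
    show "e \<notin> C \<Longrightarrow> f \<noteq> e \<Longrightarrow> edge_weight ?\<T> (insert e C) B f \<le> edge_weight ?\<T> C B f + 8"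
      by (rule edge_weight_insert_le[OF finite_block_triangles triangles])
    show "C \<subseteq> ?S \<Longrightarrow> ?S \<subseteq> C \<union> B \<Longrightarrow> tri_potential ?\<T> C B \<le> 8 * int (triangle_count C)"
      using edges_of_block_triangle \<open>?S \<subseteq> Kn_edges n\<close>
      by (intro tri_potential_le_triangle_count[OF _ triangles]) blast+
  qed simp
  show ?thesis
    using Constructor_guarantee tri_potential_empty[OF finite_block_triangles triangles]
    by (simp add: g_K3_star_def game_value_def)
qed

section \<open>Asymptotics\<close>

lemma real_choose_2: "2 * real (n choose 2) = real n * (real n - 1)"
proof (induction n)
  case (Suc n)
  have "Suc n choose 2 = n + (n choose 2)" by (simp add: numeral_2_eq_2)
  then show ?case using Suc by (simp add: algebra_simps)
qed simp

lemma real_choose_3: "6 * real (n choose 3) = real n * (real n - 1) * (real n - 2)"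
proof (induction n)
  case (Suc n)
  have "Suc n choose 3 = (n choose 2) + (n choose 3)" by (simp add: numeral_3_eq_3 numeral_2_eq_2)
  then show ?case using Suc real_choose_2[of n] by (simp add: algebra_simps)
qed (simp add: numeral_3_eq_3)

lemma g_K3_star_ge_cubic:
  assumes "q * Suc k \<le> n"
  shows "real q * (real k + 1) * real k * (real k - 25) \<le> 48 * real (g_K3_star n k)"
proof -
  let ?K = "real k" and ?g = "real (g_K3_star n k)"
  have "real_of_int (int (card (block_triangles (Suc k) q)) - 8 * int (card (block_edges (Suc k) q)))
      \<le> real_of_int (8 * int (g_K3_star n k))"
    using g_K3_star_ge_block_bound[OF assms] by (simp only: of_int_le_iff)
  then have "real q * real (Suc k choose 3) - 8 * real (card (block_edges (Suc k) q)) \<le> 8 * ?g"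
    by (simp add: card_block_triangles)
  moreover have "real (card (block_edges (Suc k) q)) \<le> real q * real (Suc k choose 2)"
    using card_block_edges_le[of "Suc k" q] by (metis of_nat_le_iff of_nat_mult)
  moreover have "6 * real (Suc k choose 3) = (?K + 1) * ?K * (?K - 1)"
    by (subst real_choose_3) (simp add: algebra_simps)
  then have "real q * ((?K + 1) * ?K * (?K - 1)) = 6 * (real q * real (Suc k choose 3))"
    by (simp add: ac_simps)
  moreover have "2 * real (Suc k choose 2) = (?K + 1) * ?K"
    by (subst real_choose_2) (simp add: algebra_simps)
  then have "real q * ((?K + 1) * ?K) = 2 * (real q * real (Suc k choose 2))"
    by (simp add: ac_simps)
  moreover have "real q * (?K + 1) * ?K * (?K - 25)
      = real q * ((?K + 1) * ?K * (?K - 1)) - 24 * (real q * ((?K + 1) * ?K))"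
    by (simp add: algebra_simps)
  ultimately show ?thesis by linarith
qed

lemma g_K3_star_ge_explicit:
  fixes \<delta> :: real
  assumes "25 \<le> k" and "26 \<le> \<delta> * k" and "real k ^ 2 \<le> real n"
  shows "(1 - \<delta>) * (real n * real k ^ 2 / 48) \<le> real (g_K3_star n k)"
proof -
  let ?q = "n div Suc k" and ?K = "real k" and ?N = "real n" and ?g = "real (g_K3_star n k)"
  have "n \<le> ?q * Suc k + k"
    using mod_less_divisor[of "Suc k" n] div_mult_mod_eq[of n "Suc k"] by linarith
  then have "?N \<le> real (?q * Suc k + k)" by (simp only: of_nat_le_iff)
  then have "?N - ?K \<le> real ?q * (?K + 1)" by (simp add: algebra_simps)
  then have "(?N - ?K) * (?K * (?K - 25)) \<le> real ?q * (?K + 1) * (?K * (?K - 25))"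
    using assms(1) by (intro mult_right_mono) auto
  also have "\<dots> \<le> 48 * ?g"
    using g_K3_star_ge_cubic[OF div_times_less_eq_dividend] by (simp only: mult.assoc)
  finally have cubic: "(?N - ?K) * (?K * (?K - 25)) \<le> 48 * ?g" .
  have expand: "(?N - ?K) * (?K * (?K - 25)) = ?N * ?K^2 - 25 * (?N * ?K) - ?K * ?K^2 + 25 * ?K^2"
    by (simp add: algebra_simps power2_eq_square)
  have "?K * ?K^2 \<le> ?K * ?N" using assms(3) by (intro mult_left_mono) auto
  moreover have "26 * (?N * ?K) \<le> \<delta> * (?N * ?K^2)"
    using mult_right_mono[OF assms(2), of "?N * ?K"] by (simp add: algebra_simps power2_eq_square)
  moreover have "?K * ?N = ?N * ?K" by (rule mult.commute)
  ultimately have "?N * ?K^2 - \<delta> * (?N * ?K^2) \<le> 48 * ?g"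
    using cubic expand zero_le_power2[of ?K] by linarith
  then have "(?N * ?K^2 - \<delta> * (?N * ?K^2)) / 48 \<le> ?g"
    by (subst pos_divide_le_eq) (simp_all add: mult.commute)
  moreover have "(1 - \<delta>) * (?N * ?K^2 / 48) = (?N * ?K^2 - \<delta> * (?N * ?K^2)) / 48"
    by (simp add: algebra_simps)
  ultimately show ?thesis by (simp only:)
qed

theorem theorem1p5:
  fixes k :: "nat \<Rightarrow> nat"
  assumes "filterlim k at_top at_top"
    and "(\<lambda>n. real (k n)) \<in> o(\<lambda>n. sqrt (real n))"
  shows "\<forall>\<delta>>0. \<forall>\<^sub>F n in at_top.
           real (g_K3_star n (k n)) \<ge> (1 - \<delta>) * (real n * real (k n) ^ 2 / 48)"
proof (intro allI impI)
  fix \<delta> :: real assume "\<delta> > 0"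
  have "\<forall>\<^sub>F n in at_top. max 25 (26 / \<delta>) \<le> real (k n)"
    using filterlim_compose[OF filterlim_real_sequentially assms(1)] unfolding filterlim_at_top by blast
  moreover have "\<forall>\<^sub>F n in at_top. norm (real (k n)) \<le> 1 * norm (sqrt (real n))"
    using landau_o.smallD[OF assms(2), of 1] by simp
  ultimately show "\<forall>\<^sub>F n in at_top. real (g_K3_star n (k n)) \<ge> (1 - \<delta>) * (real n * real (k n) ^ 2 / 48)"
  proof eventually_elim
    case (elim n)
    then have "25 \<le> real (k n)" and "26 / \<delta> \<le> real (k n)" by (simp_all only: max.bounded_iff)
    then have "25 \<le> k n" and "26 \<le> \<delta> * real (k n)"
      using pos_divide_le_eq[OF \<open>\<delta> > 0\<close>] by (simp_all add: mult.commute)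
    moreover have "real (k n) ^ 2 \<le> real n"
      using power_mono[of "real (k n)" "sqrt (real n)" 2] elim(2) by simp
    ultimately show ?case by (rule g_K3_star_ge_explicit)
  qed
qed

end
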